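(* Let $\mathcal{R}$ be a left-connected rewriting system over a signature $\Sigma$, let $L_1\xleftarrow{[i_1,o_1]}K_1\to R_1$ and $L_2\xleftarrow{[i_2,o_2]}K_2\to R_2$ be rules of $\mathcal{R}$, and let $(g_1,g_2\colon G\to L_1+L_2)$ be a gluing scheme yielding a pre-critical pair, with gluing $\epsilon\colon L_1+L_2\twoheadrightarrow S=\mathtt{coeq}(g_1,g_2)$ and interface $in(S)+out(S)\xrightarrow{[\subseteq,\subseteq]}S$. This pre-critical pair is parallel if and only if both of the following hold: (1) no hyperedge of $L_1$ is glued to a hyperedge of $L_2$; and (2) whenever a node $v_1$ of $L_1$ and a node $v_2$ of $L_2$ are glued, $v_1$ lies in the interface of $L_1$ (the image of $[i_1,o_1]$, i.e. $in(L_1)\cup out(L_1)$) and $v_2$ lies in the interface of $L_2$ (the image of $[i_2,o_2]$).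
   Context: A signature $\Sigma$ is a set of triples $(x,n,m)$ (label, arity, coarity). A $\Sigma$-hypergraph $G=(V,E,s,t,l)$ has finite sets $V$ (nodes), $E$ (hyperedges), maps $s,t\colon E\to V^*$ (lists of sources/targets) and a labelling $l\colon E\to\Sigma$ sending a hyperedge with $n$ sources and $m$ targets to some $(x,n,m)$. Morphisms preserve sources, targets and labels; they form the category $\mathbf{Hyp}_\Sigma$, where colimits are computed componentwise and monos/epis are injective/surjective on nodes and hyperedges. Composition is written $f;g$; $\iota_1,\iota_2$ are coprojections. A hypergraph is discrete if it has no hyperedges. A path is a list of hyperedges $[e_1,\dots,e_n]$ with some target of $e_k$ equal to a source of $e_{k+1}$ for each $k$; it goes from $v$ to $v'$ if $v$ is a source of $e_1$ and $v'$ a target of $e_n$; a cycle is a path with some source of $e_1$ a target of $e_n$. In-degree (out-degree) of a node $v$: number of pairs $(e,i)$ with $v$ the $i$-th target (source) of $e$; $in(H)$, $out(H)$: nodes of in-degree $0$, out-degree $0$. $H$ is ma (monogamous acyclic) if it has no cycle and all in- and out-degrees are $\le 1$. A cospan $I\to H\leftarrow O$ with $I,O$ discrete is an ma-cospan if $H$ is ma and the legs are mono with images $in(H)$ and $out(H)$. $H$ is strongly connected if for all $x\in in(H)$, $y\in out(H)$ there is a path from $x$ to $y$. A left-connected rule is a span $L\xleftarrow{[i_L,o_L]}K=I+O\xrightarrow{[i_R,o_R]}R$ with $I,O$ discrete, $I\to L\leftarrow O$ and $I\to R\leftarrow O$ ma-cospans, $[i_L,o_L]$ mono and $L$ strongly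 connected; a left-connected rewriting system is a finite set of such rules. A convex match is a mono $m\colon L\to G$ such that every path in $G$ between two nodes of $m(L)$ has all its hyperedges in $m(L)$. A derivation between ma-cospans $n\to G\leftarrow m$ and $n\to H\leftarrow m$ via a rule $L\leftarrow K\to R$ is given by a convex match $L\to G$, a hypergraph $C$ and a diagram $G\leftarrow C\to H$, $K\to C$, $R\to H$, $n+m\to C$ in which $K,L,C,G$ and $K,R,C,H$ are pushout squares (the left one a boundary complement, automatic for left-connected systems) and everything commutes with the interfaces; for left-connected systems mono matches are automatically convex and pushout complements exist uniquely. A pre-critical pair consists of two derivations, via rules $L_1\leftarrow K_1\to R_1$ and $L_2\leftarrow K_2\to R_2$ with pushout complements $C_1, C_2$, from a common ma-cospan $n\to S\leftarrow m$ with matches $m_1,m_2$ such that $[m_1,m_2]\colon L_1+L_2\to S$ is epi. It is parallel if there exist morphisms $g_1\colon L_1\to C_2$ and $g_2\colon L_2\to C_1$ such that $g_1$ followed by $C_2\to S$ equals $m_1$ and $g_2$ followed by $C_1\to S$ equals $m_2$. A gluing scheme for $L_1,L_2$ is a $\Sigma$-hypergraph $G$ with morphisms $g_1,g_2\colon G\to L_1+L_2$; its gluing is the coequaliser $\epsilon\colon L_1+L_2\to S=\mathtt{coeq}(g_1,g_2)$. Two nodes (or hyperedges) $x,x'$ of $L_1+L_2$ are glued if some node (hyperedge) $y$ of $G$ has $g_1(y)=x$, $g_2(y)=x'$. The gluing scheme yields a pre-critical pair if $\iota_1;\epsilon$ and $\iota_2;\epsilon$ are mono and $in(S)\xrightarrow{\subseteq}S\xleftarrow{\subseteq}out(S)$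 is an ma-cospan; the pre-critical pair is then formed by the (unique) derivations from this ma-cospan with matches $\iota_1;\epsilon$ and $\iota_2;\epsilon$. *)

theory Defs
  imports Main
begin

(* A hypergraph with node type 'v, hyperedge type 'e and labels of type 'l.
   The signature is a set of triples (label, arity, coarity). *)
record ('v, 'e, 'l) hyp =
  nodes :: "'v set"
  edges :: "'e set"
  src   :: "'e \<Rightarrow> 'v list"
  tgt   :: "'e \<Rightarrow> 'v list"
  lab   :: "'e \<Rightarrow> 'l"

type_synonym ('l) signature = "('l \<times> nat \<times> nat) set"

definition hyp_wf :: "'l signature \<Rightarrow> ('v, 'e, 'l) hyp \<Rightarrow> bool" where
  "hyp_wf \<Sigma> G \<longleftrightarrow> finite (nodes G) \<and> finite (edges G) \<and>
     (\<forall>e\<in>edges G. set (src G e) \<subseteq> nodes G \<and> set (tgt G e) \<subseteq> nodes G \<and>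
        (lab G e, length (src G e), length (tgt G e)) \<in> \<Sigma>)"

definition discrete :: "('v, 'e, 'l) hyp \<Rightarrow> bool" where
  "discrete G \<longleftrightarrow> edges G = {}"

definition discrete_on :: "'v set \<Rightarrow> ('v, 'e, 'l) hyp" where
  "discrete_on V = \<lparr>nodes = V, edges = {}, src = (\<lambda>_. []), tgt = (\<lambda>_. []), lab = (\<lambda>_. undefined)\<rparr>"

type_synonym ('v, 'e, 'w, 'f) hmor = "('v \<Rightarrow> 'w) \<times> ('e \<Rightarrow> 'f)"

definition morph :: "('v, 'e, 'l) hyp \<Rightarrow> ('w, 'f, 'l) hyp \<Rightarrow> ('v, 'e, 'w, 'f) hmor \<Rightarrow> bool" where
  "morph G H f \<longleftrightarrow> fst f ` nodes G \<subseteq> nodes H \<and> snd f ` edges G \<subseteq> edges H \<and>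
     (\<forall>e\<in>edges G. src H (snd f e) = map (fst f) (src G e) \<and>
                   tgt H (snd f e) = map (fst f) (tgt G e) \<and>
                   lab H (snd f e) = lab G e)"

(* diagrammatic composition f;g *)
definition hcomp :: "('v, 'e, 'w, 'f) hmor \<Rightarrow> ('w, 'f, 'x, 'y) hmor \<Rightarrow> ('v, 'e, 'x, 'y) hmor" where
  "hcomp f g = (fst g \<circ> fst f, snd g \<circ> snd f)"

definition hid :: "('v, 'e, 'v, 'e) hmor" where
  "hid = (id, id)"

(* equality of morphisms with domain G (only values on G matter) *)
definition hm_eq_on :: "('v, 'e, 'l) hyp \<Rightarrow> ('v, 'e, 'w, 'f) hmor \<Rightarrow> ('v, 'e, 'w, 'f) hmor \<Rightarrow> bool" where
  "hm_eq_on G f g \<longleftrightarrow> (\<forall>v\<in>nodes G. fst f v = fst g v) \<and> (\<forall>e\<in>edges G. snd f e = snd g e)"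

definition mono :: "('v, 'e, 'l) hyp \<Rightarrow> ('v, 'e, 'w, 'f) hmor \<Rightarrow> bool" where
  "mono G f \<longleftrightarrow> inj_on (fst f) (nodes G) \<and> inj_on (snd f) (edges G)"

definition hsum :: "('v1, 'e1, 'l) hyp \<Rightarrow> ('v2, 'e2, 'l) hyp \<Rightarrow> ('v1 + 'v2, 'e1 + 'e2, 'l) hyp" where
  "hsum G H = \<lparr>nodes = nodes G <+> nodes H, edges = edges G <+> edges H,
     src = case_sum (map Inl \<circ> src G) (map Inr \<circ> src H),
     tgt = case_sum (map Inl \<circ> tgt G) (map Inr \<circ> tgt H),
     lab = case_sum (lab G) (lab H)\<rparr>"

definition inj1 :: "('v1, 'e1, 'v1 + 'v2, 'e1 + 'e2) hmor" where
  "inj1 = (Inl, Inl)"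

definition inj2 :: "('v2, 'e2, 'v1 + 'v2, 'e1 + 'e2) hmor" where
  "inj2 = (Inr, Inr)"

definition copair :: "('v1, 'e1, 'w, 'f) hmor \<Rightarrow> ('v2, 'e2, 'w, 'f) hmor \<Rightarrow> ('v1 + 'v2, 'e1 + 'e2, 'w, 'f) hmor" where
  "copair f g = (case_sum (fst f) (fst g), case_sum (snd f) (snd g))"

section \<open>Colimits (computed componentwise, as in Set)\<close>

(* D with p : B \<rightarrow> D, q : C \<rightarrow> D is a pushout of f : A \<rightarrow> B, g : A \<rightarrow> C in Set:
   the square commutes, [p,q] is onto D, and its kernel is the equivalence
   relation on B + C generated by Inl (f a) ~ Inr (g a). *)
definition set_pushout :: "'a set \<Rightarrow> 'b set \<Rightarrow> 'c set \<Rightarrow> 'd set \<Rightarrow>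
    ('a \<Rightarrow> 'b) \<Rightarrow> ('a \<Rightarrow> 'c) \<Rightarrow> ('b \<Rightarrow> 'd) \<Rightarrow> ('c \<Rightarrow> 'd) \<Rightarrow> bool" where
  "set_pushout A B C D f g p q \<longleftrightarrow>
     (\<forall>a\<in>A. p (f a) = q (g a)) \<and> D = p ` B \<union> q ` C \<and>
     (let R = {(Inl (f a), Inr (g a)) | a. a \<in> A} in
       \<forall>x\<in>B <+> C. \<forall>y\<in>B <+> C. (case_sum p q x = case_sum p q y \<longleftrightarrow> (x, y) \<in> (R \<union> R\<inverse>)\<^sup>*))"

definition hpushout :: "('a, 'ae, 'l) hyp \<Rightarrow> ('b, 'be, 'l) hyp \<Rightarrow> ('c, 'ce, 'l) hyp \<Rightarrow> ('d, 'de, 'l) hyp \<Rightarrow>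
    ('a, 'ae, 'b, 'be) hmor \<Rightarrow> ('b, 'be, 'd, 'de) hmor \<Rightarrow> ('a, 'ae, 'c, 'ce) hmor \<Rightarrow> ('c, 'ce, 'd, 'de) hmor \<Rightarrow> bool" where
  "hpushout K L C G f m k c \<longleftrightarrow>
     morph K L f \<and> morph L G m \<and> morph K C k \<and> morph C G c \<and>
     set_pushout (nodes K) (nodes L) (nodes C) (nodes G) (fst f) (fst k) (fst m) (fst c) \<and>
     set_pushout (edges K) (edges L) (edges C) (edges G) (snd f) (snd k) (snd m) (snd c)"

definition set_coeq :: "'a set \<Rightarrow> 'b set \<Rightarrow> 'd set \<Rightarrow> ('a \<Rightarrow> 'b) \<Rightarrow> ('a \<Rightarrow> 'b) \<Rightarrow> ('b \<Rightarrow> 'd) \<Rightarrow> bool" where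
  "set_coeq A B D g1 g2 e \<longleftrightarrow> e ` B = D \<and>
     (let R = {(g1 a, g2 a) | a. a \<in> A} in
       \<forall>x\<in>B. \<forall>y\<in>B. (e x = e y \<longleftrightarrow> (x, y) \<in> (R \<union> R\<inverse>)\<^sup>*))"

definition hcoeq :: "('a, 'ae, 'l) hyp \<Rightarrow> ('b, 'be, 'l) hyp \<Rightarrow> ('d, 'de, 'l) hyp \<Rightarrow>
    ('a, 'ae, 'b, 'be) hmor \<Rightarrow> ('a, 'ae, 'b, 'be) hmor \<Rightarrow> ('b, 'be, 'd, 'de) hmor \<Rightarrow> bool" where
  "hcoeq G H S g1 g2 eps \<longleftrightarrow> morph G H g1 \<and> morph G H g2 \<and> morph H S eps \<and>
     set_coeq (nodes G) (nodes H) (nodes S) (fst g1) (fst g2) (fst eps) \<and>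
     set_coeq (edges G) (edges H) (edges S) (snd g1) (snd g2) (snd eps)"

definition indeg :: "('v, 'e, 'l) hyp \<Rightarrow> 'v \<Rightarrow> nat" where
  "indeg H v = card {(e, i). e \<in> edges H \<and> i < length (tgt H e) \<and> tgt H e ! i = v}"

definition outdeg :: "('v, 'e, 'l) hyp \<Rightarrow> 'v \<Rightarrow> nat" where
  "outdeg H v = card {(e, i). e \<in> edges H \<and> i < length (src H e) \<and> src H e ! i = v}"

definition in_nodes :: "('v, 'e, 'l) hyp \<Rightarrow> 'v set" where
  "in_nodes H = {v \<in> nodes H. indeg H v = 0}"

definition out_nodes :: "('v, 'e, 'l) hyp \<Rightarrow> 'v set" where
  "out_nodes H = {v \<in> nodes H. outdeg H v = 0}"

definition is_path :: "('v, 'e, 'l) hyp \<Rightarrow> 'e list \<Rightarrow> bool" where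
  "is_path H p \<longleftrightarrow> p \<noteq> [] \<and> set p \<subseteq> edges H \<and>
     (\<forall>k. Suc k < length p \<longrightarrow> set (tgt H (p ! k)) \<inter> set (src H (p ! Suc k)) \<noteq> {})"

definition path_from :: "('v, 'e, 'l) hyp \<Rightarrow> 'e list \<Rightarrow> 'v \<Rightarrow> 'v \<Rightarrow> bool" where
  "path_from H p v v' \<longleftrightarrow> is_path H p \<and> v \<in> set (src H (hd p)) \<and> v' \<in> set (tgt H (last p))"

definition is_cycle :: "('v, 'e, 'l) hyp \<Rightarrow> 'e list \<Rightarrow> bool" where
  "is_cycle H p \<longleftrightarrow> is_path H p \<and> set (src H (hd p)) \<inter> set (tgt H (last p)) \<noteq> {}"

definition ma_hyp :: "('v, 'e, 'l) hyp \<Rightarrow> bool" where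
  "ma_hyp H \<longleftrightarrow> (\<nexists>p. is_cycle H p) \<and> (\<forall>v\<in>nodes H. indeg H v \<le> 1 \<and> outdeg H v \<le> 1)"

definition ma_cospan :: "('a, 'ae, 'l) hyp \<Rightarrow> ('a, 'ae, 'v, 'e) hmor \<Rightarrow> ('v, 'e, 'l) hyp \<Rightarrow>
    ('b, 'be, 'v, 'e) hmor \<Rightarrow> ('b, 'be, 'l) hyp \<Rightarrow> bool" where
  "ma_cospan In i H ou Out \<longleftrightarrow> discrete In \<and> discrete Out \<and> ma_hyp H \<and>
     morph In H i \<and> morph Out H ou \<and> mono In i \<and> mono Out ou \<and>
     fst i ` nodes In = in_nodes H \<and> fst ou ` nodes Out = out_nodes H"

definition strongly_connected :: "('v, 'e, 'l) hyp \<Rightarrow> bool" where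
  "strongly_connected H \<longleftrightarrow> (\<forall>x\<in>in_nodes H. \<forall>y\<in>out_nodes H. \<exists>p. path_from H p x y)"

(* L <-[iL,oL]- I + O -[iR,oR]-> R *)
record ('v, 'e, 'l) rule =
  rL  :: "('v, 'e, 'l) hyp"
  rI  :: "('v, 'e, 'l) hyp"
  rO  :: "('v, 'e, 'l) hyp"
  riL :: "('v, 'e, 'v, 'e) hmor"
  roL :: "('v, 'e, 'v, 'e) hmor"
  rR  :: "('v, 'e, 'l) hyp"
  riR :: "('v, 'e, 'v, 'e) hmor"
  roR :: "('v, 'e, 'v, 'e) hmor"

definition rK :: "('v, 'e, 'l) rule \<Rightarrow> ('v + 'v, 'e + 'e, 'l) hyp" where
  "rK r = hsum (rI r) (rO r)"

definition left_connected_rule :: "'l signature \<Rightarrow> ('v, 'e, 'l) rule \<Rightarrow> bool" where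
  "left_connected_rule \<Sigma> r \<longleftrightarrow>
     hyp_wf \<Sigma> (rL r) \<and> hyp_wf \<Sigma> (rI r) \<and> hyp_wf \<Sigma> (rO r) \<and> hyp_wf \<Sigma> (rR r) \<and>
     discrete (rI r) \<and> discrete (rO r) \<and>
     ma_cospan (rI r) (riL r) (rL r) (roL r) (rO r) \<and>
     ma_cospan (rI r) (riR r) (rR r) (roR r) (rO r) \<and>
     mono (rK r) (copair (riL r) (roL r)) \<and>
     strongly_connected (rL r)"

definition left_connected_system :: "'l signature \<Rightarrow> ('v, 'e, 'l) rule set \<Rightarrow> bool" where
  "left_connected_system \<Sigma> Rs \<longleftrightarrow> finite Rs \<and> (\<forall>r\<in>Rs. left_connected_rule \<Sigma> r)"

definition interface :: "('v, 'e, 'l) rule \<Rightarrow> 'v set" where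
  "interface r = fst (riL r) ` nodes (rI r) \<union> fst (roL r) ` nodes (rO r)"

(* C with k : K \<rightarrow> C, c : C \<rightarrow> S is the pushout complement of K -> L -m-> S
   occurring in a derivation from the ma-cospan in(S) \<rightarrow> S \<leftarrow> out(S):
   K,L,C,S is a pushout square and the interface in(S)+out(S) factors through C. *)
definition deriv_complement :: "'l signature \<Rightarrow> ('v, 'e, 'l) rule \<Rightarrow> ('w, 'f, 'l) hyp \<Rightarrow>
    ('v, 'e, 'w, 'f) hmor \<Rightarrow> ('w, 'f, 'l) hyp \<Rightarrow> ('v + 'v, 'e + 'e, 'w, 'f) hmor \<Rightarrow> ('w, 'f, 'w, 'f) hmor \<Rightarrow> bool" where
  "deriv_complement \<Sigma> r S m C k c \<longleftrightarrow>
     hyp_wf \<Sigma> C \<and>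
     hpushout (rK r) (rL r) C S (copair (riL r) (roL r)) m k c \<and>
     (let Bd = hsum (discrete_on (in_nodes S) :: ('w, 'f, 'l) hyp) (discrete_on (out_nodes S) :: ('w, 'f, 'l) hyp) in
      \<exists>b. morph Bd C b \<and> hm_eq_on Bd (hcomp b c) (copair hid hid))"

definition parallel_pcp :: "'l signature \<Rightarrow> ('v, 'e, 'l) rule \<Rightarrow> ('v, 'e, 'l) rule \<Rightarrow> ('w, 'f, 'l) hyp \<Rightarrow>
    ('v, 'e, 'w, 'f) hmor \<Rightarrow> ('v, 'e, 'w, 'f) hmor \<Rightarrow> bool" where
  "parallel_pcp \<Sigma> r1 r2 S m1 m2 \<longleftrightarrow>
     (\<exists>C1 k1 c1 C2 k2 c2 h1 h2.
        deriv_complement \<Sigma> r1 S m1 C1 k1 c1 \<and> deriv_complement \<Sigma> r2 S m2 C2 k2 c2 \<and>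
        morph (rL r1) C2 h1 \<and> hm_eq_on (rL r1) (hcomp h1 c2) m1 \<and>
        morph (rL r2) C1 h2 \<and> hm_eq_on (rL r2) (hcomp h2 c1) m2)"

definition glued_nodes :: "('a, 'ae, 'l) hyp \<Rightarrow> ('a, 'ae, 'b, 'be) hmor \<Rightarrow> ('a, 'ae, 'b, 'be) hmor \<Rightarrow> 'b \<Rightarrow> 'b \<Rightarrow> bool" where
  "glued_nodes G g1 g2 x x' \<longleftrightarrow> (\<exists>y\<in>nodes G. fst g1 y = x \<and> fst g2 y = x')"

definition glued_edges :: "('a, 'ae, 'l) hyp \<Rightarrow> ('a, 'ae, 'b, 'be) hmor \<Rightarrow> ('a, 'ae, 'b, 'be) hmor \<Rightarrow> 'be \<Rightarrow> 'be \<Rightarrow> bool" where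
  "glued_edges G g1 g2 x x' \<longleftrightarrow> (\<exists>y\<in>edges G. snd g1 y = x \<and> snd g2 y = x')"

end

theory Submission imports Defs begin

(* A match m1 factors through the pushout complement of a derivation at the other match m2
   iff its image avoids what that derivation deletes: the hyperedges of m2(L2) and the nodes of
   m2(L2) outside the interface. Because S is monogamous, rewriting at m2 never leaves dangling
   hyperedges, so S with exactly these items removed is a pushout complement, and a match that
   factors through any complement avoids them. Hence the pair is parallel iff m1(L1) and m2(L2)
   share no hyperedge and share only interface nodes. Since both matches are injective, the
   coequaliser identifies an item of L1 with one of L2 only through a single item of the gluing
   scheme, so this overlap is exactly what the scheme glues. *)

definition occurrences :: "('e \<Rightarrow> 'v list) \<Rightarrow> 'e set \<Rightarrow> 'v \<Rightarrow> ('e \<times> nat) set" where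
  "occurrences ps E v = {(e, i). e \<in> E \<and> i < length (ps e) \<and> ps e ! i = v}"

lemma indeg_eq_card_occurrences: "indeg H v = card (occurrences (tgt H) (edges H) v)"
  unfolding indeg_def occurrences_def ..

lemma outdeg_eq_card_occurrences: "outdeg H v = card (occurrences (src H) (edges H) v)"
  unfolding outdeg_def occurrences_def ..

lemma finite_occurrences: "finite E \<Longrightarrow> finite (occurrences ps E v)"
  by (rule finite_subset[of _ "Sigma E (\<lambda>e. {..<length (ps e)})"])
    (auto simp: occurrences_def)

lemma occurrences_eq_empty_iff: "occurrences ps E v = {} \<longleftrightarrow> (\<forall>e\<in>E. v \<notin> set (ps e))"
  by (auto simp: occurrences_def in_set_conv_nth)

lemma card_occurrences_ge_2:
  assumes "finite E" "e \<in> E" "e' \<in> E" "e \<noteq> e'" "v \<in> set (ps e)" "v \<in> set (ps e')"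
  shows "2 \<le> card (occurrences ps E v)"
proof -
  obtain i j where "i < length (ps e)" "ps e ! i = v" "j < length (ps e')" "ps e' ! j = v"
    using assms(5,6) by (meson in_set_conv_nth)
  then have "{(e, i), (e', j)} \<subseteq> occurrences ps E v"
    using assms(2,3) by (auto simp: occurrences_def)
  from card_mono[OF finite_occurrences[OF assms(1)] this] show ?thesis
    using assms(4) by simp
qed

lemma in_nodes_iff:
  "finite (edges H) \<Longrightarrow>
     v \<in> in_nodes H \<longleftrightarrow> v \<in> nodes H \<and> (\<forall>e\<in>edges H. v \<notin> set (tgt H e))"
  by (simp add: in_nodes_def indeg_eq_card_occurrences finite_occurrences occurrences_eq_empty_iff)

lemma out_nodes_iff:
  "finite (edges H) \<Longrightarrow>
     v \<in> out_nodes H \<longleftrightarrow> v \<in> nodes H \<and> (\<forall>e\<in>edges H. v \<notin> set (src H e))"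
  by (simp add: out_nodes_def outdeg_eq_card_occurrences finite_occurrences occurrences_eq_empty_iff)

lemma shared_port_in_image:
  assumes "\<forall>e\<in>E. f e \<in> E' \<and> ps' (f e) = map g (ps e)" "finite E'"
    and "card (occurrences ps' E' (g v)) \<le> 1"
    and "e \<in> E" "v \<in> set (ps e)" "e' \<in> E'" "g v \<in> set (ps' e')"
  shows "e' \<in> f ` E"
proof (rule ccontr)
  assume "e' \<notin> f ` E"
  with assms(1,4,5) have "f e \<in> E'" "g v \<in> set (ps' (f e))" "f e \<noteq> e'"
    by auto
  from card_occurrences_ge_2[OF assms(2) this(1) assms(6) this(3,2) assms(7)] assms(3)
  show False by simp
qed

lemma morph_inner_node_not_boundary:
  assumes "finite (edges L)" "finite (edges S)" "morph L S m"
    and "v \<in> nodes L" "v \<notin> in_nodes L" "v \<notin> out_nodes L"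
  shows "fst m v \<notin> in_nodes S \<union> out_nodes S"
proof -
  obtain e e' where "e \<in> edges L" "v \<in> set (tgt L e)" "e' \<in> edges L" "v \<in> set (src L e')"
    using assms(4-6) in_nodes_iff[OF assms(1)] out_nodes_iff[OF assms(1)] by blast
  with assms(3) have "fst m v \<in> set (tgt S (snd m e))" "snd m e \<in> edges S"
    and "fst m v \<in> set (src S (snd m e'))" "snd m e' \<in> edges S"
    unfolding morph_def by auto
  then show ?thesis
    using in_nodes_iff[OF assms(2)] out_nodes_iff[OF assms(2)] by blast
qed

lemma ma_hyp_edge_at_inner_node_in_image:
  assumes "ma_hyp S" "finite (edges S)" "finite (edges L)" "morph L S m"
    and "v \<in> nodes L" "v \<notin> in_nodes L" "v \<notin> out_nodes L"
    and "e \<in> edges S" "fst m v \<in> set (src S e) \<union> set (tgt S e)"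
  shows "e \<in> snd m ` edges L"
proof -
  have "fst m v \<in> nodes S" "\<forall>e\<in>edges L. snd m e \<in> edges S"
    using assms(4,5) unfolding morph_def by auto
  then have deg: "card (occurrences (src S) (edges S) (fst m v)) \<le> 1"
    "card (occurrences (tgt S) (edges S) (fst m v)) \<le> 1"
    using assms(1) unfolding ma_hyp_def indeg_eq_card_occurrences outdeg_eq_card_occurrences
    by auto
  have ports: "\<forall>e\<in>edges L. snd m e \<in> edges S \<and> src S (snd m e) = map (fst m) (src L e)"
    "\<forall>e\<in>edges L. snd m e \<in> edges S \<and> tgt S (snd m e) = map (fst m) (tgt L e)"
    using assms(4) unfolding morph_def by auto
  obtain e1 e2 where "e1 \<in> edges L" "v \<in> set (src L e1)" "e2 \<in> edges L" "v \<in> set (tgt L e2)"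
    using assms(5-7) in_nodes_iff[OF assms(3)] out_nodes_iff[OF assms(3)] by blast
  then show ?thesis
    using assms(8,9) shared_port_in_image[OF ports(1) assms(2) deg(1)]
      shared_port_in_image[OF ports(2) assms(2) deg(2)] by blast
qed

lemma set_pushout_complement:
  assumes "inj_on p B" "f ` A \<subseteq> B" "p ` B \<subseteq> D"
  shows "set_pushout A B (D - p ` (B - f ` A)) D f (p \<circ> f) p id"
  unfolding set_pushout_def Let_def
proof (intro conjI ballI)
  let ?C = "D - p ` (B - f ` A)"
  let ?R = "{(Inl (f a), Inr ((p \<circ> f) a)) | a. a \<in> A}"
  show "D = p ` B \<union> id ` ?C"
    using assms(3) by auto
  fix x y assume x: "x \<in> B <+> ?C" and y: "y \<in> B <+> ?C"
  have glue: "(Inl b, Inr c) \<in> ?R" if "b \<in> B" "c \<in> ?C" "p b = c" for b c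
    using that by auto
  show "case_sum p id x = case_sum p id y \<longleftrightarrow> (x, y) \<in> (?R \<union> ?R\<inverse>)\<^sup>*"
  proof
    assume "(x, y) \<in> (?R \<union> ?R\<inverse>)\<^sup>*"
    then show "case_sum p id x = case_sum p id y"
      by (induction rule: rtrancl_induct) auto
  next
    assume eq: "case_sum p id x = case_sum p id y"
    from x y show "(x, y) \<in> (?R \<union> ?R\<inverse>)\<^sup>*"
    proof (elim PlusE)
      fix b b' assume "x = Inl b" "y = Inl b'" "b \<in> B" "b' \<in> B"
      with eq assms(1) show ?thesis
        by (simp add: inj_on_eq_iff)
    next
      fix b c assume "x = Inl b" "y = Inr c" "b \<in> B" "c \<in> ?C"
      with eq glue show ?thesis
        by (simp add: r_into_rtrancl)
    next
      fix c b assume "x = Inr c" "y = Inl b" "c \<in> ?C" "b \<in> B"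
      with eq glue show ?thesis
        by (simp add: r_into_rtrancl)
    next
      fix c c' assume "x = Inr c" "y = Inr c'"
      with eq show ?thesis
        by simp
    qed
  qed
qed (simp add: assms)

lemma set_pushout_common_value_in_image:
  assumes "set_pushout A B C D f g p q" "b \<in> B" "c \<in> C" "p b = q c"
  shows "b \<in> f ` A"
proof -
  let ?R = "{(Inl (f a), Inr (g a)) | a. a \<in> A}"
  have kernel: "\<forall>x\<in>B <+> C. \<forall>y\<in>B <+> C.
      case_sum p q x = case_sum p q y \<longleftrightarrow> (x, y) \<in> (?R \<union> ?R\<inverse>)\<^sup>*"
    using assms(1) unfolding set_pushout_def Let_def by blast
  have "(Inl b, Inr c) \<in> (?R \<union> ?R\<inverse>)\<^sup>*"
    using kernel[rule_format, OF InlI[OF assms(2)] InrI[OF assms(3)]] assms(4) by simp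
  then obtain z where "(Inl b, z) \<in> ?R \<union> ?R\<inverse>"
    by (cases rule: converse_rtranclE) auto
  then show ?thesis
    by auto
qed

lemma rtrancl_exits_set:
  assumes "(x, y) \<in> R\<^sup>*" "x \<in> X" "y \<notin> X"
  shows "\<exists>a b. (a, b) \<in> R \<and> a \<in> X \<and> b \<notin> X"
  using assms by (induction rule: rtrancl_induct) auto

lemma set_coeq_kernel:
  assumes "set_coeq A B D g1 g2 e" "x \<in> B" "y \<in> B"
  shows "e x = e y \<longleftrightarrow>
    (x, y) \<in> ({(g1 a, g2 a) | a. a \<in> A} \<union> {(g1 a, g2 a) | a. a \<in> A}\<inverse>)\<^sup>*"
  using assms unfolding set_coeq_def Let_def by blast

lemma set_coeq_identifies:
  assumes "set_coeq A B D g1 g2 e" "a \<in> A" "g1 a \<in> B" "g2 a \<in> B"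
  shows "e (g1 a) = e (g2 a)"
  using set_coeq_kernel[OF assms(1,3,4)] assms(2) by blast

text \<open>A generating chain from Inl x must leave Inl x through a pair whose other end is
  identified with Inl x; by injectivity on the summands that end can only be Inr y.\<close>

lemma set_coeq_Plus_cross_iff:
  assumes co: "set_coeq A (B1 <+> B2) D g1 g2 e"
    and g: "\<forall>a\<in>A. g1 a \<in> B1 <+> B2 \<and> g2 a \<in> B1 <+> B2"
    and inj1: "inj_on (e \<circ> Inl) B1" and inj2: "inj_on (e \<circ> Inr) B2"
    and x: "x \<in> B1" and y: "y \<in> B2"
  shows "e (Inl x) = e (Inr y) \<longleftrightarrow>
    (\<exists>a\<in>A. g1 a = Inl x \<and> g2 a = Inr y \<or> g1 a = Inr y \<and> g2 a = Inl x)"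
proof
  assume eq: "e (Inl x) = e (Inr y)"
  let ?R = "{(g1 a, g2 a) | a. a \<in> A}"
  have "(Inl x, Inr y) \<in> (?R \<union> ?R\<inverse>)\<^sup>*"
    using set_coeq_kernel[OF co] x y eq by blast
  from rtrancl_exits_set[OF this, of "{Inl x}"]
  obtain z where "(Inl x, z) \<in> ?R \<union> ?R\<inverse>" "z \<noteq> Inl x"
    by auto
  then obtain a where a: "a \<in> A" "g1 a = Inl x \<and> g2 a = z \<or> g1 a = z \<and> g2 a = Inl x"
    and "z \<noteq> Inl x"
    by auto
  moreover have "z \<in> B1 <+> B2" "e z = e (Inl x)"
    using a g set_coeq_identifies[OF co a(1)] by auto
  ultimately have "z = Inr y"
  proof (elim PlusE)
    fix u assume "z = Inl u" "u \<in> B1" "e z = e (Inl x)" "z \<noteq> Inl x"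
    with inj_onD[OF inj1, of u x] x show ?thesis
      by simp
  next
    fix u assume "z = Inr u" "u \<in> B2" "e z = e (Inl x)"
    with inj_onD[OF inj2, of u y] y eq show ?thesis
      by simp
  qed
  with a show "\<exists>a\<in>A. g1 a = Inl x \<and> g2 a = Inr y \<or> g1 a = Inr y \<and> g2 a = Inl x"
    by blast
next
  assume "\<exists>a\<in>A. g1 a = Inl x \<and> g2 a = Inr y \<or> g1 a = Inr y \<and> g2 a = Inl x"
  then obtain a where "a \<in> A" "g1 a = Inl x \<and> g2 a = Inr y \<or> g1 a = Inr y \<and> g2 a = Inl x"
    by blast
  with set_coeq_identifies[OF co] g show "e (Inl x) = e (Inr y)"
    by fastforce
qed

lemma edges_rK_empty: "left_connected_rule \<Sigma> r \<Longrightarrow> edges (rK r) = {}"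
  by (simp add: left_connected_rule_def discrete_def rK_def hsum_def)

lemma interface_eq_image: "fst (copair (riL r) (roL r)) ` nodes (rK r) = interface r"
  by (simp add: interface_def copair_def rK_def hsum_def Plus_def image_Un image_image)

lemma interface_eq_boundary:
  "left_connected_rule \<Sigma> r \<Longrightarrow> interface r = in_nodes (rL r) \<union> out_nodes (rL r)"
  by (simp add: left_connected_rule_def ma_cospan_def interface_def)

lemma finite_edges_rL: "left_connected_rule \<Sigma> r \<Longrightarrow> finite (edges (rL r))"
  by (simp add: left_connected_rule_def hyp_wf_def)

lemma morph_hcomp: "morph A B f \<Longrightarrow> morph B C g \<Longrightarrow> morph A C (hcomp f g)"
  unfolding morph_def hcomp_def by (auto simp: image_subset_iff)

lemma morph_inj1: "morph L1 (hsum L1 L2) inj1"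
  unfolding morph_def inj1_def hsum_def by auto

lemma morph_inj2: "morph L2 (hsum L1 L2) inj2"
  unfolding morph_def inj2_def hsum_def by auto

definition pushout_complement ::
    "('v, 'e, 'l) rule \<Rightarrow> ('w, 'f, 'l) hyp \<Rightarrow> ('v, 'e, 'w, 'f) hmor \<Rightarrow> ('w, 'f, 'l) hyp" where
  "pushout_complement r S m = S\<lparr>nodes := nodes S - fst m ` (nodes (rL r) - interface r),
     edges := edges S - snd m ` edges (rL r)\<rparr>"

lemma pushout_complement_simps [simp]:
  "nodes (pushout_complement r S m) = nodes S - fst m ` (nodes (rL r) - interface r)"
  "edges (pushout_complement r S m) = edges S - snd m ` edges (rL r)"
  "src (pushout_complement r S m) = src S"
  "tgt (pushout_complement r S m) = tgt S"
  "lab (pushout_complement r S m) = lab S"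
  by (simp_all add: pushout_complement_def)

lemma morph_pushout_complement_iff:
  assumes "morph L' S m'"
  shows "morph L' (pushout_complement r S m) m' \<longleftrightarrow>
    (\<forall>e\<in>edges L'. snd m' e \<notin> snd m ` edges (rL r)) \<and>
    (\<forall>v\<in>nodes L'. fst m' v \<notin> fst m ` (nodes (rL r) - interface r))"
  using assms unfolding morph_def by auto

text \<open>The dangling condition holds because the match cannot meet a foreign edge at an inner
  node of the rule without raising a degree of the monogamous hypergraph S above one.\<close>

lemma hyp_wf_pushout_complement:
  assumes lc: "left_connected_rule \<Sigma> r" and wf: "hyp_wf \<Sigma> S" and ma: "ma_hyp S"
    and m: "morph (rL r) S m"
  shows "hyp_wf \<Sigma> (pushout_complement r S m)"
proof -
  have no_dangling: "u \<notin> fst m ` (nodes (rL r) - interface r)"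
    if "e \<in> edges S" "e \<notin> snd m ` edges (rL r)" "u \<in> set (src S e) \<union> set (tgt S e)" for e u
  proof
    assume "u \<in> fst m ` (nodes (rL r) - interface r)"
    then obtain v where "v \<in> nodes (rL r)" "v \<notin> in_nodes (rL r)" "v \<notin> out_nodes (rL r)"
      "u = fst m v"
      using interface_eq_boundary[OF lc] by auto
    with ma_hyp_edge_at_inner_node_in_image[OF ma _ finite_edges_rL[OF lc] m] wf that
    show False
      unfolding hyp_wf_def by blast
  qed
  show ?thesis
    using wf unfolding hyp_wf_def by (auto dest: no_dangling)
qed

lemma boundary_subset_pushout_complement:
  assumes "left_connected_rule \<Sigma> r" "hyp_wf \<Sigma> S" "morph (rL r) S m"
  shows "in_nodes S \<union> out_nodes S \<subseteq> nodes (pushout_complement r S m)"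
proof -
  have "fst m v \<notin> in_nodes S \<union> out_nodes S" if "v \<in> nodes (rL r) - interface r" for v
    using that morph_inner_node_not_boundary[OF finite_edges_rL[OF assms(1)] _ assms(3)] assms(2)
      interface_eq_boundary[OF assms(1)]
    unfolding hyp_wf_def by blast
  moreover have "in_nodes S \<union> out_nodes S \<subseteq> nodes S"
    by (auto simp: in_nodes_def out_nodes_def)
  ultimately show ?thesis
    by auto
qed

lemma deriv_complement_pushout_complement:
  fixes S :: "('w, 'f, 'l) hyp"
  assumes lc: "left_connected_rule \<Sigma> r" and wf: "hyp_wf \<Sigma> S" and ma: "ma_hyp S"
    and m: "morph (rL r) S m" and inj: "mono (rL r) m"
  shows "deriv_complement \<Sigma> r S m (pushout_complement r S m) (hcomp (copair (riL r) (roL r)) m) hid"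
proof -
  let ?f = "copair (riL r) (roL r)" and ?C = "pushout_complement r S m"
  let ?Bd = "hsum (discrete_on (in_nodes S) :: ('w, 'f, 'l) hyp) (discrete_on (out_nodes S))"
  have K: "edges (rK r) = {}" "fst ?f ` nodes (rK r) = interface r"
    using edges_rK_empty[OF lc] interface_eq_image[of r] by simp_all
  have interface_nodes: "interface r \<subseteq> nodes (rL r)"
    using interface_eq_boundary[OF lc] by (auto simp: in_nodes_def out_nodes_def)
  have inj_nodes: "inj_on (fst m) (nodes (rL r))" and inj_edges: "inj_on (snd m) (edges (rL r))"
    using inj unfolding Defs.mono_def by auto
  have image_nodes: "fst m ` nodes (rL r) \<subseteq> nodes S"
    and image_edges: "snd m ` edges (rL r) \<subseteq> edges S"
    using m unfolding morph_def by auto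
  have interface_kept: "fst m ` interface r \<subseteq> nodes ?C"
    using image_nodes interface_nodes
      inj_on_image_set_diff[OF inj_nodes, of "nodes (rL r)" "interface r"]
    by auto
  have "fst (hcomp ?f m) ` nodes (rK r) = fst m ` interface r"
    using K(2) by (metis fst_conv hcomp_def image_comp)
  then have "morph (rK r) ?C (hcomp ?f m)"
    using K(1) interface_kept unfolding morph_def by simp
  moreover have "morph (rK r) (rL r) ?f"
    using K interface_nodes unfolding morph_def by auto
  moreover have "morph ?C S hid"
    unfolding morph_def hid_def by auto
  moreover have "set_pushout (nodes (rK r)) (nodes (rL r)) (nodes ?C) (nodes S)
      (fst ?f) (fst (hcomp ?f m)) (fst m) (fst (hid :: ('w, 'f, 'w, 'f) hmor))"
    using set_pushout_complement[OF inj_nodes _ image_nodes, of "fst ?f" "nodes (rK r)"]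
      K(2) interface_nodes
    by (simp add: hcomp_def hid_def)
  moreover have "set_pushout (edges (rK r)) (edges (rL r)) (edges ?C) (edges S)
      (snd ?f) (snd (hcomp ?f m)) (snd m) (snd (hid :: ('w, 'f, 'w, 'f) hmor))"
    using set_pushout_complement[OF inj_edges _ image_edges, of "snd ?f" "edges (rK r)"] K(1)
    by (simp add: hcomp_def hid_def)
  moreover have "morph ?Bd ?C (copair hid hid)" "hm_eq_on ?Bd (hcomp (copair hid hid) hid) (copair hid hid)"
    using boundary_subset_pushout_complement[OF lc wf m]
    by (auto simp: morph_def hm_eq_on_def hsum_def discrete_on_def copair_def hcomp_def hid_def)
  ultimately show ?thesis
    using hyp_wf_pushout_complement[OF lc wf ma m] m
    unfolding deriv_complement_def hpushout_def Let_def by blast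
qed

lemma morph_pushout_complement_if_factors:
  assumes lc: "left_connected_rule \<Sigma> r" and dc: "deriv_complement \<Sigma> r S m C k c"
    and m': "morph L' S m'" and h: "morph L' C h" and factors: "hm_eq_on L' (hcomp h c) m'"
  shows "morph L' (pushout_complement r S m) m'"
proof -
  let ?f = "copair (riL r) (roL r)"
  have po: "hpushout (rK r) (rL r) C S ?f m k c"
    using dc unfolding deriv_complement_def by blast
  have po_nodes: "set_pushout (nodes (rK r)) (nodes (rL r)) (nodes C) (nodes S)
      (fst ?f) (fst k) (fst m) (fst c)"
    and po_edges: "set_pushout (edges (rK r)) (edges (rL r)) (edges C) (edges S)
      (snd ?f) (snd k) (snd m) (snd c)"
    using po unfolding hpushout_def by blast+
  have "snd m' e \<notin> snd m ` edges (rL r)" if "e \<in> edges L'" for e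
  proof
    assume "snd m' e \<in> snd m ` edges (rL r)"
    moreover have "snd m' e = snd c (snd h e)" "snd h e \<in> edges C"
      using that h factors unfolding morph_def hm_eq_on_def hcomp_def by auto
    ultimately obtain e2 where "e2 \<in> edges (rL r)" "snd h e \<in> edges C" "snd m e2 = snd c (snd h e)"
      by auto
    from set_pushout_common_value_in_image[OF po_edges this] edges_rK_empty[OF lc]
    show False by simp
  qed
  moreover have "fst m' v \<notin> fst m ` (nodes (rL r) - interface r)" if "v \<in> nodes L'" for v
  proof
    assume "fst m' v \<in> fst m ` (nodes (rL r) - interface r)"
    moreover have "fst m' v = fst c (fst h v)" "fst h v \<in> nodes C"
      using that h factors unfolding morph_def hm_eq_on_def hcomp_def by auto
    ultimately obtain v2 where "v2 \<in> nodes (rL r)" "fst h v \<in> nodes C" "fst m v2 = fst c (fst h v)"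
      and "v2 \<notin> interface r"
      by auto
    with set_pushout_common_value_in_image[OF po_nodes] interface_eq_image[of r]
    show False by blast
  qed
  ultimately show ?thesis
    using morph_pushout_complement_iff[OF m'] by blast
qed

lemma parallel_pcp_iff_morph_pushout_complements:
  assumes lc1: "left_connected_rule \<Sigma> r1" and lc2: "left_connected_rule \<Sigma> r2"
    and wf: "hyp_wf \<Sigma> S" and ma: "ma_hyp S"
    and m1: "morph (rL r1) S m1" "mono (rL r1) m1" and m2: "morph (rL r2) S m2" "mono (rL r2) m2"
  shows "parallel_pcp \<Sigma> r1 r2 S m1 m2 \<longleftrightarrow>
    morph (rL r1) (pushout_complement r2 S m2) m1 \<and> morph (rL r2) (pushout_complement r1 S m1) m2"
proof
  assume "parallel_pcp \<Sigma> r1 r2 S m1 m2"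
  then show "morph (rL r1) (pushout_complement r2 S m2) m1 \<and> morph (rL r2) (pushout_complement r1 S m1) m2"
    unfolding parallel_pcp_def
    using morph_pushout_complement_if_factors[OF lc1 _ m2(1)]
      morph_pushout_complement_if_factors[OF lc2 _ m1(1)]
    by blast
next
  have "hm_eq_on (rL r1) (hcomp m1 hid) m1" "hm_eq_on (rL r2) (hcomp m2 hid) m2"
    by (simp_all add: hm_eq_on_def hcomp_def hid_def)
  moreover assume "morph (rL r1) (pushout_complement r2 S m2) m1 \<and> morph (rL r2) (pushout_complement r1 S m1) m2"
  ultimately show "parallel_pcp \<Sigma> r1 r2 S m1 m2"
    unfolding parallel_pcp_def
    using deriv_complement_pushout_complement[OF lc1 wf ma m1]
      deriv_complement_pushout_complement[OF lc2 wf ma m2]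
    by blast
qed

lemma parallel_pcp_iff_matches_overlap_in_interfaces:
  assumes "left_connected_rule \<Sigma> r1" "left_connected_rule \<Sigma> r2" "hyp_wf \<Sigma> S" "ma_hyp S"
    and m1: "morph (rL r1) S m1" "mono (rL r1) m1" and m2: "morph (rL r2) S m2" "mono (rL r2) m2"
  shows "parallel_pcp \<Sigma> r1 r2 S m1 m2 \<longleftrightarrow>
    (\<forall>e1\<in>edges (rL r1). \<forall>e2\<in>edges (rL r2). snd m1 e1 \<noteq> snd m2 e2) \<and>
    (\<forall>v1\<in>nodes (rL r1). \<forall>v2\<in>nodes (rL r2).
       fst m1 v1 = fst m2 v2 \<longrightarrow> v1 \<in> interface r1 \<and> v2 \<in> interface r2)"
  unfolding parallel_pcp_iff_morph_pushout_complements[OF assms]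
    morph_pushout_complement_iff[OF m1(1)] morph_pushout_complement_iff[OF m2(1)]
  by (auto; metis DiffI imageI)

lemma glued_nodes_iff_identified:
  assumes co: "hcoeq G (hsum L1 L2) S g1 g2 eps"
    and "mono L1 (hcomp inj1 eps)" "mono L2 (hcomp inj2 eps)"
    and "v1 \<in> nodes L1" "v2 \<in> nodes L2"
  shows "glued_nodes G g1 g2 (Inl v1) (Inr v2) \<or> glued_nodes G g1 g2 (Inr v2) (Inl v1) \<longleftrightarrow>
    fst eps (Inl v1) = fst eps (Inr v2)"
proof -
  have "set_coeq (nodes G) (nodes L1 <+> nodes L2) (nodes S) (fst g1) (fst g2) (fst eps)"
    "\<forall>a\<in>nodes G. fst g1 a \<in> nodes L1 <+> nodes L2 \<and> fst g2 a \<in> nodes L1 <+> nodes L2"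
    using co unfolding hcoeq_def morph_def by (auto simp: hsum_def)
  from set_coeq_Plus_cross_iff[OF this] assms(2-5) show ?thesis
    unfolding glued_nodes_def Defs.mono_def hcomp_def inj1_def inj2_def by auto
qed

lemma glued_edges_iff_identified:
  assumes co: "hcoeq G (hsum L1 L2) S g1 g2 eps"
    and "mono L1 (hcomp inj1 eps)" "mono L2 (hcomp inj2 eps)"
    and "e1 \<in> edges L1" "e2 \<in> edges L2"
  shows "glued_edges G g1 g2 (Inl e1) (Inr e2) \<or> glued_edges G g1 g2 (Inr e2) (Inl e1) \<longleftrightarrow>
    snd eps (Inl e1) = snd eps (Inr e2)"
proof -
  have "set_coeq (edges G) (edges L1 <+> edges L2) (edges S) (snd g1) (snd g2) (snd eps)"
    "\<forall>a\<in>edges G. snd g1 a \<in> edges L1 <+> edges L2 \<and> snd g2 a \<in> edges L1 <+> edges L2"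
    using co unfolding hcoeq_def morph_def by (auto simp: hsum_def)
  from set_coeq_Plus_cross_iff[OF this] assms(2-5) show ?thesis
    unfolding glued_edges_def Defs.mono_def hcomp_def inj1_def inj2_def by auto
qed

theorem mainTheorem4:
  fixes \<Sigma> :: "'l signature"
    and Rs :: "('v, 'e, 'l) rule set"
    and r1 r2 :: "('v, 'e, 'l) rule"
    and G :: "('g, 'ge, 'l) hyp"
    and g1 g2 :: "('g, 'ge, 'v + 'v, 'e + 'e) hmor"
    and S :: "('w, 'f, 'l) hyp"
    and eps :: "('v + 'v, 'e + 'e, 'w, 'f) hmor"
  assumes "left_connected_system \<Sigma> Rs"
    and "r1 \<in> Rs" and "r2 \<in> Rs"
    and "hyp_wf \<Sigma> G" and "hyp_wf \<Sigma> S"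
    and "hcoeq G (hsum (rL r1) (rL r2)) S g1 g2 eps"
    and "mono (rL r1) (hcomp inj1 eps)"
    and "mono (rL r2) (hcomp inj2 eps)"
    and "ma_cospan (discrete_on (in_nodes S) :: ('w, 'f, 'l) hyp) hid S hid
               (discrete_on (out_nodes S) :: ('w, 'f, 'l) hyp)"
  shows "parallel_pcp \<Sigma> r1 r2 S (hcomp inj1 eps) (hcomp inj2 eps) \<longleftrightarrow>
     ((\<forall>e1\<in>edges (rL r1). \<forall>e2\<in>edges (rL r2).
         \<not> glued_edges G g1 g2 (Inl e1) (Inr e2) \<and> \<not> glued_edges G g1 g2 (Inr e2) (Inl e1)) \<and>
      (\<forall>v1\<in>nodes (rL r1). \<forall>v2\<in>nodes (rL r2).
         (glued_nodes G g1 g2 (Inl v1) (Inr v2) \<or> glued_nodes G g1 g2 (Inr v2) (Inl v1)) \<longrightarrow>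
         v1 \<in> interface r1 \<and> v2 \<in> interface r2))"
proof -
  let ?m1 = "hcomp inj1 eps" and ?m2 = "hcomp inj2 eps"
  have lc: "left_connected_rule \<Sigma> r1" "left_connected_rule \<Sigma> r2"
    using assms(1-3) unfolding left_connected_system_def by auto
  have ma: "ma_hyp S"
    using assms(9) unfolding ma_cospan_def by blast
  have eps: "morph (hsum (rL r1) (rL r2)) S eps"
    using assms(6) unfolding hcoeq_def by blast
  have m1: "morph (rL r1) S ?m1" and m2: "morph (rL r2) S ?m2"
    using morph_hcomp[OF morph_inj1 eps] morph_hcomp[OF morph_inj2 eps] .
  have parallel_iff: "parallel_pcp \<Sigma> r1 r2 S ?m1 ?m2 \<longleftrightarrow>
      (\<forall>e1\<in>edges (rL r1). \<forall>e2\<in>edges (rL r2). snd eps (Inl e1) \<noteq> snd eps (Inr e2)) \<and>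
      (\<forall>v1\<in>nodes (rL r1). \<forall>v2\<in>nodes (rL r2).
         fst eps (Inl v1) = fst eps (Inr v2) \<longrightarrow> v1 \<in> interface r1 \<and> v2 \<in> interface r2)"
    using parallel_pcp_iff_matches_overlap_in_interfaces[OF lc assms(5) ma m1 assms(7) m2 assms(8)]
    by (simp add: hcomp_def inj1_def inj2_def)
  show ?thesis
    unfolding parallel_iff
    using glued_nodes_iff_identified[OF assms(6-8)] glued_edges_iff_identified[OF assms(6-8)]
    by blast
qed

end
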